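(* Let $\Bbbk$ be a field with $\operatorname{char}\Bbbk\ne2$, $X$ a set, $z\in X$, and let $f\in\mathrm{DiAs}_z\langle X\rangle$. Then $f\in\mathrm{DiSJ}\langle X\rangle$ if and only if $\bar f\in\mathrm{SJ}\langle X\rangle$.
   Context: $\mathrm{As}\langle X\rangle$ is the free associative algebra; $\mathrm{SJ}\langle X\rangle$ is the subalgebra of $\mathrm{As}\langle X\rangle^{(+)}$ (product $a\circ b=\tfrac12(ab+ba)$) generated by $X$. An associative dialgebra is a vector space with bilinear $\vdash,\dashv$ satisfying $(x\dashv y)\vdash z=(x\vdash y)\vdash z$, $x\dashv(y\vdash z)=x\dashv(y\dashv z)$, $(x\vdash y)\vdash z=x\vdash(y\vdash z)$, $(x\dashv y)\dashv z=x\dashv(y\dashv z)$, $(x\vdash y)\dashv z=x\vdash(y\dashv z)$. $\mathrm{DiAs}\langle X\rangle$ is the free associative dialgebra, with basis the words $x_1\cdots\dot x_k\cdots x_n$ ($x_1\vdash\cdots\vdash x_k\dashv\cdots\dashv x_n$; $x_k$ is the central letter). $\mathrm{DiAs}_z\langle X\rangle$ is the span of those basis words that contain $z$ exactly once with $z$ as central letter. For $f\in\mathrm{DiAs}\langle X\rangle$, $\bar f\in\mathrm{As}\langle X\rangle$ is the image under the map erasing the dot (identifying $\vdash,\dashv$ with the associative product). $\mathrm{DiSJ}\langle X\rangle$ is the subdialgebra of $\mathrm{DiAs}\langle X\rangle^{(+)}$ generated by $X$, where $a\vdash_+b=\tfrac12(a\vdash b+b\dashv a)$, $a\dashv_+b=\tfrac12(a\dashv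 b+b\vdash a)$. *)

theory Defs
  imports Main
begin

text \<open>Elements of the free associative algebra As<X> over a field 'k are represented
as functions from words ('x list) to coefficients (finitely supported ones are the
actual elements; generated elements are automatically finitely supported).
Elements of the free associative dialgebra DiAs<X> are functions on pairs (w, k),
where (w, k) with k < length w stands for the basis word w with central letter w!k.\<close>

type_synonym ('x, 'k) as_elem = "'x list \<Rightarrow> 'k"
type_synonym ('x, 'k) dias_elem = "'x list \<times> nat \<Rightarrow> 'k"

definition as_letter :: "'x \<Rightarrow> ('x, 'k::field) as_elem" where
  "as_letter x = (\<lambda>w. if w = [x] then 1 else 0)"

definition as_add :: "('x, 'k::field) as_elem \<Rightarrow> ('x, 'k) as_elem \<Rightarrow> ('x, 'k) as_elem" where
  "as_add a b = (\<lambda>w. a w + b w)"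

definition as_smult :: "'k::field \<Rightarrow> ('x, 'k) as_elem \<Rightarrow> ('x, 'k) as_elem" where
  "as_smult c a = (\<lambda>w. c * a w)"

definition as_mult :: "('x, 'k::field) as_elem \<Rightarrow> ('x, 'k) as_elem \<Rightarrow> ('x, 'k) as_elem" where
  "as_mult a b = (\<lambda>w. \<Sum>n\<le>length w. a (take n w) * b (drop n w))"

definition as_jordan :: "('x, 'k::field) as_elem \<Rightarrow> ('x, 'k) as_elem \<Rightarrow> ('x, 'k) as_elem" where
  "as_jordan a b = as_smult (1/2) (as_add (as_mult a b) (as_mult b a))"

inductive_set SJ :: "'x set \<Rightarrow> ('x, 'k::field) as_elem set" for X :: "'x set" where
  SJ_gen: "x \<in> X \<Longrightarrow> as_letter x \<in> SJ X"
| SJ_zero: "(\<lambda>w. 0) \<in> SJ X"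
| SJ_add: "a \<in> SJ X \<Longrightarrow> b \<in> SJ X \<Longrightarrow> as_add a b \<in> SJ X"
| SJ_smult: "a \<in> SJ X \<Longrightarrow> as_smult c a \<in> SJ X"
| SJ_jordan: "a \<in> SJ X \<Longrightarrow> b \<in> SJ X \<Longrightarrow> as_jordan a b \<in> SJ X"

definition di_letter :: "'x \<Rightarrow> ('x, 'k::field) dias_elem" where
  "di_letter x = (\<lambda>p. if p = ([x], 0) then 1 else 0)"

definition di_add :: "('x, 'k::field) dias_elem \<Rightarrow> ('x, 'k) dias_elem \<Rightarrow> ('x, 'k) dias_elem" where
  "di_add a b = (\<lambda>p. a p + b p)"

definition di_smult :: "'k::field \<Rightarrow> ('x, 'k) dias_elem \<Rightarrow> ('x, 'k) dias_elem" where
  "di_smult c a = (\<lambda>p. c * a p)"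

text \<open>Left product: (u, i) |- (v, j) = (u @ v, length u + j) (central letter from the right factor).\<close>
definition di_vdash :: "('x, 'k::field) dias_elem \<Rightarrow> ('x, 'k) dias_elem \<Rightarrow> ('x, 'k) dias_elem" where
  "di_vdash a b = (\<lambda>(w, k). \<Sum>n\<le>length w.
      if n \<le> k \<and> k < length w then (\<Sum>i<n. a (take n w, i)) * b (drop n w, k - n) else 0)"

text \<open>Right product: (u, i) -| (v, j) = (u @ v, i) (central letter from the left factor).\<close>
definition di_dashv :: "('x, 'k::field) dias_elem \<Rightarrow> ('x, 'k) dias_elem \<Rightarrow> ('x, 'k) dias_elem" where
  "di_dashv a b = (\<lambda>(w, k). \<Sum>n\<le>length w.
      if k < n then a (take n w, k) * (\<Sum>j<length w - n. b (drop n w, j)) else 0)"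

definition di_vdash_plus :: "('x, 'k::field) dias_elem \<Rightarrow> ('x, 'k) dias_elem \<Rightarrow> ('x, 'k) dias_elem" where
  "di_vdash_plus a b = di_smult (1/2) (di_add (di_vdash a b) (di_dashv b a))"

definition di_dashv_plus :: "('x, 'k::field) dias_elem \<Rightarrow> ('x, 'k) dias_elem \<Rightarrow> ('x, 'k) dias_elem" where
  "di_dashv_plus a b = di_smult (1/2) (di_add (di_dashv a b) (di_vdash b a))"

inductive_set DiSJ :: "'x set \<Rightarrow> ('x, 'k::field) dias_elem set" for X :: "'x set" where
  DiSJ_gen: "x \<in> X \<Longrightarrow> di_letter x \<in> DiSJ X"
| DiSJ_zero: "(\<lambda>p. 0) \<in> DiSJ X"
| DiSJ_add: "a \<in> DiSJ X \<Longrightarrow> b \<in> DiSJ X \<Longrightarrow> di_add a b \<in> DiSJ X"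
| DiSJ_smult: "a \<in> DiSJ X \<Longrightarrow> di_smult c a \<in> DiSJ X"
| DiSJ_vdash: "a \<in> DiSJ X \<Longrightarrow> b \<in> DiSJ X \<Longrightarrow> di_vdash_plus a b \<in> DiSJ X"
| DiSJ_dashv: "a \<in> DiSJ X \<Longrightarrow> b \<in> DiSJ X \<Longrightarrow> di_dashv_plus a b \<in> DiSJ X"

definition DiAs_z :: "'x set \<Rightarrow> 'x \<Rightarrow> ('x, 'k::field) dias_elem set" where
  "DiAs_z X z = {f. finite {p. f p \<noteq> 0} \<and>
     (\<forall>w k. f (w, k) \<noteq> 0 \<longrightarrow> set w \<subseteq> X \<and> k < length w \<and> w ! k = z \<and> count_list w z = 1)}"

definition dibar :: "('x, 'k::field) dias_elem \<Rightarrow> ('x, 'k) as_elem" where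
  "dibar f = (\<lambda>w. \<Sum>k<length w. f (w, k))"

end

theory Submission imports Defs begin

text \<open>The bar map is a homomorphism from DiAs<X>^(+) onto As<X>^(+) that sends generators to
generators, which gives one direction. For the other, lift an element a of As<X> to the
element dot_z z a of DiAs<X> that keeps exactly the words of a containing z once and puts the
dot on that z; on DiAs_z<X> this inverts the bar map. Splitting a product of words at the
position of z gives, for any preimages a', b' of the z-free parts of a and b,
  dot_z (ab) = a' |- dot_z b + dot_z a -| b',
so by induction over SJ<X> both dot_z a and a preimage of the z-free part of a lie in DiSJ<X>.\<close>

definition occurs_once_at :: "'x \<Rightarrow> 'x list \<Rightarrow> nat \<Rightarrow> bool" where
  "occurs_once_at z w k \<longleftrightarrow> k < length w \<and> w ! k = z \<and> count_list w z = 1"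

lemma count_list_take_drop: "count_list w z = count_list (take n w) z + count_list (drop n w) z"
  by (metis append_take_drop_id count_list_append)

lemma occurs_once_at_drop:
  assumes "n \<le> k" "n \<le> length w"
  shows "occurs_once_at z w k \<longleftrightarrow> z \<notin> set (take n w) \<and> occurs_once_at z (drop n w) (k - n)"
proof (cases "k < length w \<and> w ! k = z")
  case True
  then have "z \<in> set (drop n w)"
    using assms by (metis diff_less_mono length_drop nth_drop nth_mem le_add_diff_inverse)
  then have "count_list (drop n w) z \<noteq> 0" by (simp add: count_list_0_iff)
  then show ?thesis
    using True assms count_list_take_drop[of w z n]
    by (auto simp: occurs_once_at_def count_list_0_iff[symmetric])
qed (use assms in \<open>auto simp: occurs_once_at_def\<close>)

lemma occurs_once_at_take:
  assumes "k < n" "n \<le> length w"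
  shows "occurs_once_at z w k \<longleftrightarrow> occurs_once_at z (take n w) k \<and> z \<notin> set (drop n w)"
proof (cases "w ! k = z")
  case True
  then have "z \<in> set (take n w)"
    using assms by (metis in_set_conv_nth length_take min.absorb2 nth_take)
  then have "count_list (take n w) z \<noteq> 0" by (simp add: count_list_0_iff)
  then show ?thesis
    using True assms count_list_take_drop[of w z n]
    by (auto simp: occurs_once_at_def count_list_0_iff[symmetric])
qed (use assms in \<open>auto simp: occurs_once_at_def\<close>)

lemma occurs_once_at_unique:
  assumes "occurs_once_at z w i" "occurs_once_at z w k"
  shows "i = k"
proof (rule ccontr)
  assume "i \<noteq> k"
  then obtain m n where mn: "m < n" "occurs_once_at z w m" "occurs_once_at z w n"
    using assms by (metis linorder_neqE_nat)
  then have "occurs_once_at z (take n w) m" "z \<in> set (drop n w)"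
    using occurs_once_at_take[of m n w z] occurs_once_at_drop[of n n w z]
    by (auto simp: occurs_once_at_def intro: nth_mem)
  with mn show False
    using occurs_once_at_take[of m n w z] by (auto simp: occurs_once_at_def)
qed

lemma sum_if_le_shift:
  "(\<Sum>k<(L::nat). if n \<le> k then g (k - n) else 0) = (\<Sum>j<L - n. g j :: 'a::comm_monoid_add)"
proof (induction L)
  case (Suc L)
  then show ?case by (cases "n \<le> L") (simp_all add: Suc_diff_le)
qed simp

lemma sum_if_less_restrict:
  assumes "n \<le> (L::nat)"
  shows "(\<Sum>k<L. if k < n then g k else 0) = (\<Sum>k<n. g k :: 'a::comm_monoid_add)"
proof -
  have "(\<Sum>k<L. if k < n then g k else 0) = sum g {k\<in>{..<L}. k < n}"
    by (simp only: sum.inter_filter[OF finite_lessThan])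
  also have "{k\<in>{..<L}. k < n} = {..<n}" using assms by auto
  finally show ?thesis .
qed

lemma dibar_prefix: "n \<le> length w \<Longrightarrow> (\<Sum>i<n. f (take n w, i)) = dibar f (take n w)"
  by (simp add: dibar_def min_absorb2)

lemma dibar_suffix: "(\<Sum>j<length w - n. f (drop n w, j)) = dibar f (drop n w)"
  by (simp add: dibar_def)

lemma dibar_di_vdash: "dibar (di_vdash a b) = as_mult (dibar a) (dibar b)"
proof
  fix w :: "'a list"
  let ?L = "length w"
  have "dibar (di_vdash a b) w = (\<Sum>n\<le>?L. \<Sum>k<?L.
      if n \<le> k then (\<Sum>i<n. a (take n w, i)) * b (drop n w, k - n) else 0)"
    unfolding dibar_def di_vdash_def by (subst sum.swap) (auto intro!: sum.cong)
  also have "\<dots> = (\<Sum>n\<le>?L. (\<Sum>i<n. a (take n w, i)) *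
      (\<Sum>k<?L. if n \<le> k then b (drop n w, k - n) else 0))"
    by (auto simp: sum_distrib_left if_distrib intro!: sum.cong)
  also have "\<dots> = (\<Sum>n\<le>?L. (\<Sum>i<n. a (take n w, i)) * (\<Sum>j<?L - n. b (drop n w, j)))"
    by (intro sum.cong refl arg_cong[where f = "(*) _"] sum_if_le_shift)
  also have "\<dots> = as_mult (dibar a) (dibar b) w"
    by (simp add: as_mult_def dibar_prefix dibar_suffix)
  finally show "dibar (di_vdash a b) w = as_mult (dibar a) (dibar b) w" .
qed

lemma dibar_di_dashv: "dibar (di_dashv a b) = as_mult (dibar a) (dibar b)"
proof
  fix w :: "'a list"
  let ?L = "length w"
  have "dibar (di_dashv a b) w = (\<Sum>n\<le>?L. \<Sum>k<?L.
      if k < n then a (take n w, k) * (\<Sum>j<?L - n. b (drop n w, j)) else 0)"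
    unfolding dibar_def di_dashv_def by (subst sum.swap) simp
  also have "\<dots> = (\<Sum>n\<le>?L. (\<Sum>k<n. a (take n w, k)) * (\<Sum>j<?L - n. b (drop n w, j)))"
    by (auto simp: sum_if_less_restrict sum_distrib_right intro!: sum.cong)
  also have "\<dots> = as_mult (dibar a) (dibar b) w"
    by (simp add: as_mult_def dibar_prefix dibar_suffix)
  finally show "dibar (di_dashv a b) w = as_mult (dibar a) (dibar b) w" .
qed

lemma dibar_di_add: "dibar (di_add a b) = as_add (dibar a) (dibar b)"
  by (auto simp: dibar_def di_add_def as_add_def sum.distrib)

lemma dibar_di_smult: "dibar (di_smult c a) = as_smult c (dibar a)"
  by (auto simp: dibar_def di_smult_def as_smult_def sum_distrib_left)

lemma dibar_di_vdash_plus: "dibar (di_vdash_plus a b) = as_jordan (dibar a) (dibar b)"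
  by (simp add: di_vdash_plus_def as_jordan_def dibar_di_add dibar_di_smult dibar_di_vdash
      dibar_di_dashv)

lemma dibar_di_dashv_plus: "dibar (di_dashv_plus a b) = as_jordan (dibar a) (dibar b)"
  by (simp add: di_dashv_plus_def as_jordan_def dibar_di_add dibar_di_smult dibar_di_vdash
      dibar_di_dashv as_add_def add.commute)

lemma dibar_di_letter: "dibar (di_letter x) = as_letter x"
  by (auto simp: dibar_def di_letter_def as_letter_def)

lemma dibar_zero: "dibar (\<lambda>p. 0) = (\<lambda>w. 0)"
  by (simp add: dibar_def)

lemma dibar_mem_SJ: "f \<in> DiSJ X \<Longrightarrow> dibar f \<in> SJ X"
  by (induction rule: DiSJ.induct)
    (simp_all add: dibar_di_letter dibar_zero dibar_di_add dibar_di_smult dibar_di_vdash_plus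
      dibar_di_dashv_plus SJ.intros)

definition dot_z :: "'x \<Rightarrow> ('x, 'k::field) as_elem \<Rightarrow> ('x, 'k) dias_elem" where
  "dot_z z a = (\<lambda>(w, k). if occurs_once_at z w k then a w else 0)"

definition z_free_part :: "'x \<Rightarrow> ('x, 'k::field) as_elem \<Rightarrow> ('x, 'k) as_elem" where
  "z_free_part z a = (\<lambda>w. if z \<in> set w then 0 else a w)"

lemma z_free_part_as_add: "z_free_part z (as_add a b) = as_add (z_free_part z a) (z_free_part z b)"
  by (auto simp: z_free_part_def as_add_def)

lemma z_free_part_as_smult: "z_free_part z (as_smult c a) = as_smult c (z_free_part z a)"
  by (auto simp: z_free_part_def as_smult_def)

lemma z_free_part_as_mult:
  "z_free_part z (as_mult a b) = as_mult (z_free_part z a) (z_free_part z b)"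
proof
  fix w :: "'a list"
  have "z \<in> set w \<longleftrightarrow> z \<in> set (take n w) \<or> z \<in> set (drop n w)" for n
    by (metis Un_iff append_take_drop_id set_append)
  then have "z_free_part z a (take n w) * z_free_part z b (drop n w) =
      (if z \<in> set w then 0 else a (take n w) * b (drop n w))" for n
    by (auto simp: z_free_part_def)
  then show "z_free_part z (as_mult a b) w = as_mult (z_free_part z a) (z_free_part z b) w"
    by (simp add: z_free_part_def as_mult_def)
qed

lemma z_free_part_as_letter:
  "z_free_part z (as_letter x) = (if x = z then (\<lambda>w. 0) else as_letter x)"
  by (auto simp: z_free_part_def as_letter_def)

lemma z_free_part_as_jordan:
  "z_free_part z (as_jordan a b) = as_jordan (z_free_part z a) (z_free_part z b)"
  by (simp add: as_jordan_def z_free_part_as_add z_free_part_as_smult z_free_part_as_mult)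

lemma dot_z_as_add: "dot_z z (as_add a b) = di_add (dot_z z a) (dot_z z b)"
  by (auto simp: dot_z_def as_add_def di_add_def)

lemma dot_z_as_smult: "dot_z z (as_smult c a) = di_smult c (dot_z z a)"
  by (auto simp: dot_z_def as_smult_def di_smult_def)

lemma dot_z_as_letter: "dot_z z (as_letter x) = (if x = z then di_letter z else (\<lambda>p. 0))"
  by (auto simp: dot_z_def as_letter_def di_letter_def occurs_once_at_def)

lemma dot_z_zero: "dot_z z (\<lambda>w. 0) = (\<lambda>p. 0)"
  by (auto simp: dot_z_def)

text \<open>In a factorisation w = take n w @ drop n w the single z lies either in the right
factor (giving the |- term) or in the left one (giving the -| term).\<close>
lemma dot_z_mult_summand:
  assumes "n \<le> length w"
  shows "(if occurs_once_at z w k then a (take n w) * b (drop n w) else 0) =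
    (if n \<le> k \<and> k < length w then z_free_part z a (take n w) * dot_z z b (drop n w, k - n)
     else 0) +
    (if k < n then dot_z z a (take n w, k) * z_free_part z b (drop n w) else (0::'k::field))"
proof (cases "n \<le> k")
  case True
  have "\<not> occurs_once_at z w k" if "\<not> k < length w"
    using that by (simp add: occurs_once_at_def)
  then show ?thesis
    using True occurs_once_at_drop[OF True assms] by (auto simp: z_free_part_def dot_z_def)
next
  case False
  then show ?thesis
    using occurs_once_at_take[OF _ assms, of k] by (simp add: z_free_part_def dot_z_def)
qed

lemma dot_z_as_mult:
  assumes "dibar a' = z_free_part z a" and "dibar b' = z_free_part z b"
  shows "dot_z z (as_mult a b) = di_add (di_vdash a' (dot_z z b)) (di_dashv (dot_z z a) b')"
proof (rule ext, clarify)
  fix w :: "'a list" and k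
  let ?L = "length w"
  have "dot_z z (as_mult a b) (w, k) =
    (\<Sum>n\<le>?L. if occurs_once_at z w k then a (take n w) * b (drop n w) else 0)"
    by (simp add: dot_z_def as_mult_def)
  also have "\<dots> = (\<Sum>n\<le>?L.
    (if n \<le> k \<and> k < ?L then z_free_part z a (take n w) * dot_z z b (drop n w, k - n) else 0) +
    (if k < n then dot_z z a (take n w, k) * z_free_part z b (drop n w) else 0))"
    by (intro sum.cong refl dot_z_mult_summand) simp
  also have "\<dots> = di_add (di_vdash a' (dot_z z b)) (di_dashv (dot_z z a) b') (w, k)"
  proof -
    have left: "z_free_part z a (take n w) = (\<Sum>i<n. a' (take n w, i))" if "n \<le> ?L" for n
      using that by (simp add: dibar_prefix flip: assms(1))
    have right: "z_free_part z b (drop n w) = (\<Sum>j<?L - n. b' (drop n w, j))" for n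
      by (simp add: dibar_suffix flip: assms(2))
    show ?thesis
      unfolding di_add_def di_vdash_def di_dashv_def prod.case sum.distrib
      by (intro arg_cong2[where f = "(+)"] sum.cong refl) (simp_all add: left right)
  qed
  finally show "dot_z z (as_mult a b) (w, k) =
    di_add (di_vdash a' (dot_z z b)) (di_dashv (dot_z z a) b') (w, k)" .
qed

lemma dot_z_as_jordan:
  assumes "dibar a' = z_free_part z a" and "dibar b' = z_free_part z b"
  shows "dot_z z (as_jordan a b) =
    di_add (di_vdash_plus a' (dot_z z b)) (di_vdash_plus b' (dot_z z a))"
  unfolding as_jordan_def dot_z_as_smult dot_z_as_add dot_z_as_mult[OF assms]
    dot_z_as_mult[OF assms(2,1)]
  by (simp add: di_vdash_plus_def di_add_def di_smult_def fun_eq_iff algebra_simps)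

lemma zero_mem_dibar_DiSJ: "(\<lambda>w. 0) \<in> dibar ` DiSJ X"
  by (rule rev_image_eqI[where f = dibar, OF DiSJ.DiSJ_zero dibar_zero[symmetric]])

lemma dot_z_mem_DiSJ:
  assumes "a \<in> SJ X"
  shows "dot_z z a \<in> DiSJ X \<and> z_free_part z a \<in> dibar ` DiSJ X"
  using assms
proof (induction rule: SJ.induct)
  case (SJ_gen x)
  have "as_letter x \<in> dibar ` DiSJ X"
    by (rule rev_image_eqI[where f = dibar,
          OF DiSJ.DiSJ_gen[OF SJ_gen] dibar_di_letter[symmetric]])
  then show ?case
    using DiSJ.DiSJ_gen[OF SJ_gen] DiSJ.DiSJ_zero[of X] zero_mem_dibar_DiSJ
    by (auto simp: dot_z_as_letter z_free_part_as_letter)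
next
  case SJ_zero
  show ?case
    by (simp add: dot_z_zero z_free_part_def DiSJ.DiSJ_zero zero_mem_dibar_DiSJ)
next
  case (SJ_add a b)
  obtain a' b' where a'b': "a' \<in> DiSJ X" "b' \<in> DiSJ X"
    "dibar a' = z_free_part z a" "dibar b' = z_free_part z b"
    using SJ_add.IH by (metis imageE)
  have "dot_z z (as_add a b) \<in> DiSJ X"
    using SJ_add.IH by (simp add: dot_z_as_add DiSJ.DiSJ_add)
  moreover have "z_free_part z (as_add a b) = dibar (di_add a' b')"
    by (simp add: dibar_di_add a'b' z_free_part_as_add)
  ultimately show ?case using a'b' DiSJ.DiSJ_add by blast
next
  case (SJ_smult a c)
  obtain a' where a': "a' \<in> DiSJ X" "dibar a' = z_free_part z a"
    using SJ_smult.IH by (metis imageE)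
  have "dot_z z (as_smult c a) \<in> DiSJ X"
    using SJ_smult.IH by (simp add: dot_z_as_smult DiSJ.DiSJ_smult)
  moreover have "z_free_part z (as_smult c a) = dibar (di_smult c a')"
    by (simp add: dibar_di_smult a' z_free_part_as_smult)
  ultimately show ?case using a' DiSJ.DiSJ_smult by blast
next
  case (SJ_jordan a b)
  obtain a' b' where a'b': "a' \<in> DiSJ X" "b' \<in> DiSJ X"
    "dibar a' = z_free_part z a" "dibar b' = z_free_part z b"
    using SJ_jordan.IH by (metis imageE)
  have "dot_z z (as_jordan a b) \<in> DiSJ X"
    unfolding dot_z_as_jordan[OF a'b'(3,4)]
    using a'b' SJ_jordan.IH by (intro DiSJ.DiSJ_add DiSJ.DiSJ_vdash) auto
  moreover have "z_free_part z (as_jordan a b) = dibar (di_vdash_plus a' b')"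
    by (simp add: dibar_di_vdash_plus a'b' z_free_part_as_jordan)
  ultimately show ?case using a'b' DiSJ.DiSJ_vdash by blast
qed

lemma dot_z_dibar:
  assumes "f \<in> DiAs_z X z"
  shows "dot_z z (dibar f) = f"
proof (rule ext, clarify)
  fix w :: "'a list" and k
  have support: "f (w, i) = 0" if "\<not> occurs_once_at z w i" for i
    using assms that by (auto simp: DiAs_z_def occurs_once_at_def)
  show "dot_z z (dibar f) (w, k) = f (w, k)"
  proof (cases "occurs_once_at z w k")
    case True
    then have "k \<in> {..<length w}" by (simp add: occurs_once_at_def)
    moreover have "f (w, i) = 0" if "i \<noteq> k" for i
      using support occurs_once_at_unique[OF _ True] that by blast
    ultimately have "dibar f w = f (w, k)"
      unfolding dibar_def by (subst sum.remove) (auto intro: sum.neutral)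
    then show ?thesis using True by (simp add: dot_z_def)
  qed (simp add: dot_z_def support)
qed

theorem mainTheorem10:
  fixes X :: "'x set" and z :: 'x and f :: "('x, 'k::field) dias_elem"
  assumes "(2::'k) \<noteq> 0" and "z \<in> X" and "f \<in> DiAs_z X z"
  shows "f \<in> DiSJ X \<longleftrightarrow> dibar f \<in> SJ X"
proof
  assume "f \<in> DiSJ X"
  then show "dibar f \<in> SJ X" by (rule dibar_mem_SJ)
next
  assume "dibar f \<in> SJ X"
  then have "dot_z z (dibar f) \<in> DiSJ X" by (simp add: dot_z_mem_DiSJ)
  then show "f \<in> DiSJ X" by (simp add: dot_z_dibar[OF assms(3)])
qed

end
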